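(* Let $d\ge2$, $n\ge1$, and consider rotor-router aggregation in $\mathbb{Z}^d$ with $n$ particles started at the origin and any initial rotor configuration. Let $u(x)$ be the total number of exits from $x$ made by the $n$ particles, and for a directed edge $(x,y)$ between lattice neighbors let $\kappa(x,y)$ be the number of crossings from $x$ to $y$ minus the number of crossings from $y$ to $x$ made by the $n$ particles. Then for every pair of lattice neighbors $x\sim y$, \[ \big|\,u(y)-u(x)+2d\,\kappa(x,y)\,\big|\le 4d-2. \]
   Context: Rotor-router walk in $\mathbb{Z}^d$: fix a cyclic ordering of the $2d$ unit directions; each site has a rotor pointing in one of them. A particle at $x$ first advances the rotor at $x$ to the next direction in the cyclic order and then steps in that direction. Rotor-router aggregation: $n$ particles start at the origin and are released one at a time; each performs rotor-router walk until reaching a site not occupied by an earlier particle, where it stops. *)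

theory Defs
  imports Main
begin

text \<open>Points of Z^d are represented as functions nat => int vanishing at
  coordinates >= d.\<close>

type_synonym pt = "nat \<Rightarrow> int"

definition zd :: "nat \<Rightarrow> pt set" where
  "zd d = {x. \<forall>i\<ge>d. x i = 0}"

definition origin :: pt where
  "origin = (\<lambda>_. 0)"

definition unit_dirs :: "nat \<Rightarrow> pt set" where
  "unit_dirs d = {v. \<exists>i<d. \<exists>s\<in>{1, -1}. v = (\<lambda>j. if j = i then s else 0)}"

definition lattice_nbrs :: "nat \<Rightarrow> pt \<Rightarrow> pt \<Rightarrow> bool" where
  "lattice_nbrs d x y \<longleftrightarrow> x \<in> zd d \<and> y \<in> zd d \<and> (\<lambda>i. y i - x i) \<in> unit_dirs d"

text \<open>A cyclic ordering of the 2d directions is a bijection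
  e : {0..<2d} -> unit_dirs d; direction index r is followed by (r+1) mod 2d.
  A state of rotor-router aggregation: (rotor configuration, set of occupied sites,
  position of the current particle, number of particles that have stopped).\<close>

type_synonym rr_state = "(pt \<Rightarrow> nat) \<times> pt set \<times> pt \<times> nat"

definition rr_step :: "nat \<Rightarrow> (nat \<Rightarrow> pt) \<Rightarrow> rr_state \<Rightarrow> rr_state" where
  "rr_step d e s = (case s of (\<rho>, A, p, k) \<Rightarrow>
     if p \<in> A then
       (let r = (\<rho> p + 1) mod (2 * d) in (\<rho>(p := r), A, (\<lambda>i. p i + e r i), k))
     else (\<rho>, insert p A, origin, Suc k))"

definition rr_run :: "nat \<Rightarrow> (nat \<Rightarrow> pt) \<Rightarrow> (pt \<Rightarrow> nat) \<Rightarrow> nat \<Rightarrow> rr_state" where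
  "rr_run d e \<rho>0 t = (rr_step d e ^^ t) (\<rho>0, {}, origin, 0)"

definition rr_rotor :: "rr_state \<Rightarrow> pt \<Rightarrow> nat" where "rr_rotor s = fst s"
definition rr_occ :: "rr_state \<Rightarrow> pt set" where "rr_occ s = fst (snd s)"
definition rr_pos :: "rr_state \<Rightarrow> pt" where "rr_pos s = fst (snd (snd s))"
definition rr_settled :: "rr_state \<Rightarrow> nat" where "rr_settled s = snd (snd (snd s))"

text \<open>Times at which one of the first n particles makes an exit (a move) from x.\<close>
definition exit_times :: "nat \<Rightarrow> (nat \<Rightarrow> pt) \<Rightarrow> (pt \<Rightarrow> nat) \<Rightarrow> nat \<Rightarrow> pt \<Rightarrow> nat set" where
  "exit_times d e \<rho>0 n x = {t. rr_settled (rr_run d e \<rho>0 t) < n \<and>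
       rr_pos (rr_run d e \<rho>0 t) = x \<and> rr_pos (rr_run d e \<rho>0 t) \<in> rr_occ (rr_run d e \<rho>0 t)}"

definition exits :: "nat \<Rightarrow> (nat \<Rightarrow> pt) \<Rightarrow> (pt \<Rightarrow> nat) \<Rightarrow> nat \<Rightarrow> pt \<Rightarrow> nat" where
  "exits d e \<rho>0 n x = card (exit_times d e \<rho>0 n x)"

definition crossings :: "nat \<Rightarrow> (nat \<Rightarrow> pt) \<Rightarrow> (pt \<Rightarrow> nat) \<Rightarrow> nat \<Rightarrow> pt \<Rightarrow> pt \<Rightarrow> nat" where
  "crossings d e \<rho>0 n x y = card {t \<in> exit_times d e \<rho>0 n x. rr_pos (rr_run d e \<rho>0 (Suc t)) = y}"

definition kappa :: "nat \<Rightarrow> (nat \<Rightarrow> pt) \<Rightarrow> (pt \<Rightarrow> nat) \<Rightarrow> nat \<Rightarrow> pt \<Rightarrow> pt \<Rightarrow> int" where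
  "kappa d e \<rho>0 n x y = int (crossings d e \<rho>0 n x y) - int (crossings d e \<rho>0 n y x)"

end

theory Submission
  imports Defs
begin

(* Every time a particle leaves a site z, the rotor at z advances by one
   step of the cyclic order, and the particle moves in the new rotor direction.  Hence
   the k-th exit from z (k = 0, 1, ...) goes in direction e ((rho0 z + 1 + k) mod 2d):
   the exits from z cycle through the 2d directions.  Among u(z) consecutive exits, the
   number going in a fixed direction j is the number of k < u(z) in a fixed residue
   class mod 2d, which lies within (u(z) - 2d + 1)/2d .. (u(z) + 2d - 1)/2d.  So
   |u(x) - 2d * crossings(x,y)| <= 2d - 1 for every neighbour y of x, and the theorem
   follows from this bound for the edges (x,y) and (y,x) and the triangle inequality. *)

definition count_before :: "(nat \<Rightarrow> bool) \<Rightarrow> nat \<Rightarrow> nat" where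
  "count_before Q t = card {s. s < t \<and> Q s}"

lemma count_before_0 [simp]: "count_before Q 0 = 0"
  by (simp add: count_before_def)

lemma count_before_Suc:
  "count_before Q (Suc t) = count_before Q t + (if Q t then 1 else 0)"
proof -
  have "{s. s < Suc t \<and> Q s} = {s. s < t \<and> Q s} \<union> (if Q t then {t} else {})"
    by (auto simp: less_Suc_eq)
  then show ?thesis
    unfolding count_before_def by (auto simp: card_insert_if)
qed

lemma count_before_mono: "s \<le> t \<Longrightarrow> count_before Q s \<le> count_before Q t"
  unfolding count_before_def by (rule card_mono) auto

lemma count_before_strict: "s < t \<Longrightarrow> Q s \<Longrightarrow> count_before Q s < count_before Q t"
  using count_before_mono[of "Suc s" t Q] by (simp add: count_before_Suc)

lemma count_before_bij:
  "bij_betw (count_before Q) {t. t < L \<and> Q t} {..<count_before Q L}"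
proof -
  have inj: "inj_on (count_before Q) {t. t < L \<and> Q t}"
  proof (rule inj_onI)
    fix s t assume "s \<in> {t. t < L \<and> Q t}" "t \<in> {t. t < L \<and> Q t}"
      and "count_before Q s = count_before Q t"
    then show "s = t"
      using count_before_strict[of s t Q] count_before_strict[of t s Q]
      by (cases s t rule: linorder_cases) auto
  qed
  have "count_before Q ` {t. t < L \<and> Q t} \<subseteq> {..<count_before Q L}"
    using count_before_strict by auto
  moreover have "card (count_before Q ` {t. t < L \<and> Q t}) = count_before Q L"
    using card_image[OF inj] by (simp add: count_before_def)
  ultimately have "count_before Q ` {t. t < L \<and> Q t} = {..<count_before Q L}"
    by (intro card_subset_eq) auto
  with inj show ?thesis by (simp add: bij_betw_def)
qed

lemma card_occurrences_by_count:
  "card {t. t < L \<and> Q t \<and> P (count_before Q t)} = card {k. k < count_before Q L \<and> P k}"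
proof -
  have "bij_betw (count_before Q) {t \<in> {t. t < L \<and> Q t}. P (count_before Q t)}
          {k \<in> {..<count_before Q L}. P k}"
    using count_before_bij by (rule bij_betw_Collect) simp
  then show ?thesis by (simp add: bij_betw_same_card)
qed

text \<open>The elements of \<open>{..<v}\<close> congruent to \<open>c\<close> modulo \<open>m\<close> are \<open>q * m + c\<close>, for
  \<open>q < (v + m - 1 - c) div m\<close>.\<close>
lemma card_residue_class:
  assumes m: "0 < (m::nat)" and c: "c < m"
  shows "card {j. j < v \<and> j mod m = c} = (v + m - 1 - c) div m"
proof -
  let ?N = "(v + m - 1 - c) div m"
  have bound: "q * m + c < v \<longleftrightarrow> q < ?N" for q
  proof -
    have "q < ?N \<longleftrightarrow> Suc q \<le> ?N" by (rule Suc_le_eq[symmetric])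
    also have "\<dots> \<longleftrightarrow> Suc q * m \<le> v + m - 1 - c"
      using m by (rule less_eq_div_iff_mult_less_eq)
    finally show ?thesis using c by auto
  qed
  have "{j. j < v \<and> j mod m = c} = (\<lambda>q. q * m + c) ` {..<?N}"
  proof (intro set_eqI iffI)
    fix j assume "j \<in> {j. j < v \<and> j mod m = c}"
    then have j: "j < v" "j = (j div m) * m + c"
      using div_mult_mod_eq[of j m] by simp_all
    then have "j div m < ?N"
      using bound[of "j div m"] by simp
    with j(2) show "j \<in> (\<lambda>q. q * m + c) ` {..<?N}"
      by blast
  next
    fix j assume "j \<in> (\<lambda>q. q * m + c) ` {..<?N}"
    then obtain q where "q < ?N" "j = q * m + c" by blast
    then show "j \<in> {j. j < v \<and> j mod m = c}"
      using bound[of q] c by simp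
  qed
  moreover have "inj_on (\<lambda>q. q * m + c) {..<?N}"
    using m by (intro inj_onI) simp
  ultimately show ?thesis by (simp add: card_image)
qed

lemma residue_class_count_bounds:
  assumes m: "0 < (m::nat)" and c: "c < m"
  shows "int v - int c \<le> int m * int (card {j. j < v \<and> j mod m = c})"
    and "int m * int (card {j. j < v \<and> j mod m = c}) \<le> int v + int m - 1 - int c"
proof -
  define N where "N = v + m - 1 - c"
  have card: "card {j. j < v \<and> j mod m = c} = N div m"
    unfolding N_def by (rule card_residue_class[OF m c])
  have "m * (N div m) \<le> N" "N < m * (N div m) + m"
    using mult_div_mod_eq[of m N] mod_less_divisor[OF m, of N] by linarith+
  then have "int m * int (N div m) \<le> int N" "int N < int m * int (N div m) + int m"
    by (simp_all only: of_nat_mult[symmetric] of_nat_add[symmetric] of_nat_le_iff of_nat_less_iff)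
  moreover have "int N = int v + int m - 1 - int c"
    using c unfolding N_def by simp
  ultimately show "int v - int c \<le> int m * int (card {j. j < v \<and> j mod m = c})"
    and "int m * int (card {j. j < v \<and> j mod m = c}) \<le> int v + int m - 1 - int c"
    unfolding card by linarith+
qed

lemma residue_window_bounds:
  assumes m: "0 < (m::nat)" and c: "c < m"
  shows "\<bar>int u - int m * int (card {k. k < u \<and> (a + k) mod m = c})\<bar> \<le> int m - 1"
proof -
  define F where "F v = card {j. j < v \<and> j mod m = c}" for v
  have shift: "{k. k < u \<and> (a + k) mod m = c}
      = (\<lambda>j. j - a) ` ({j. j < a + u \<and> j mod m = c} - {j. j < a \<and> j mod m = c})"
    by (auto intro!: image_eqI[of _ _ "a + _"])
  have "inj_on (\<lambda>j. j - a) ({j. j < a + u \<and> j mod m = c} - {j. j < a \<and> j mod m = c})"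
    by (rule inj_onI) auto
  then have "card {k. k < u \<and> (a + k) mod m = c} = F (a + u) - F a"
    unfolding shift F_def by (simp add: card_image card_Diff_subset subset_eq)
  moreover have "F a \<le> F (a + u)"
    unfolding F_def by (rule card_mono) auto
  ultimately have "int m * int (card {k. k < u \<and> (a + k) mod m = c})
      = int m * int (F (a + u)) - int m * int (F a)"
    by (simp add: right_diff_distrib)
  then show ?thesis
    using residue_class_count_bounds[OF m c, of a] residue_class_count_bounds[OF m c, of "a + u"]
    unfolding F_def by (simp add: abs_le_iff)
qed

text \<open>At time \<open>t\<close> the current particle exits from \<open>z\<close>: it sits at \<open>z\<close> and \<open>z\<close> is
  occupied (otherwise it would settle there).\<close>
definition exit_at :: "nat \<Rightarrow> (nat \<Rightarrow> pt) \<Rightarrow> (pt \<Rightarrow> nat) \<Rightarrow> pt \<Rightarrow> nat \<Rightarrow> bool" where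
  "exit_at d e \<rho>0 z t \<longleftrightarrow>
     rr_pos (rr_run d e \<rho>0 t) = z \<and> rr_pos (rr_run d e \<rho>0 t) \<in> rr_occ (rr_run d e \<rho>0 t)"

lemma rr_run_Suc: "rr_run d e \<rho>0 (Suc t) = rr_step d e (rr_run d e \<rho>0 t)"
  by (simp add: rr_run_def)

lemma settled_mono:
  assumes "s \<le> t"
  shows "rr_settled (rr_run d e \<rho>0 s) \<le> rr_settled (rr_run d e \<rho>0 t)"
  using assms
proof (induction t rule: dec_induct)
  case (step t)
  have "rr_settled (rr_run d e \<rho>0 t) \<le> rr_settled (rr_run d e \<rho>0 (Suc t))"
    unfolding rr_run_Suc
    by (cases "rr_run d e \<rho>0 t") (simp add: rr_step_def rr_settled_def Let_def)
  with step show ?case by linarith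
qed simp

lemma rotor_Suc:
  "rr_rotor (rr_run d e \<rho>0 (Suc t)) z =
     (if exit_at d e \<rho>0 z t then (rr_rotor (rr_run d e \<rho>0 t) z + 1) mod (2 * d)
      else rr_rotor (rr_run d e \<rho>0 t) z)"
  unfolding rr_run_Suc exit_at_def
  by (cases "rr_run d e \<rho>0 t") (auto simp: rr_step_def rr_rotor_def rr_pos_def rr_occ_def Let_def)

lemma pos_Suc:
  "exit_at d e \<rho>0 z t \<Longrightarrow> rr_pos (rr_run d e \<rho>0 (Suc t)) =
     (\<lambda>i. z i + e ((rr_rotor (rr_run d e \<rho>0 t) z + 1) mod (2 * d)) i)"
  unfolding rr_run_Suc exit_at_def
  by (cases "rr_run d e \<rho>0 t") (auto simp: rr_step_def rr_rotor_def rr_pos_def rr_occ_def Let_def)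

lemma rotor_invariant:
  "rr_rotor (rr_run d e \<rho>0 t) z mod (2 * d) = (\<rho>0 z + count_before (exit_at d e \<rho>0 z) t) mod (2 * d)"
proof (induction t)
  case 0
  then show ?case by (simp add: rr_run_def rr_rotor_def)
next
  case (Suc t)
  then show ?case
    by (simp add: rotor_Suc count_before_Suc mod_Suc_eq) (metis mod_Suc_eq)
qed

lemma pos_after_exit:
  assumes "exit_at d e \<rho>0 z t"
  shows "rr_pos (rr_run d e \<rho>0 (Suc t)) =
     (\<lambda>i. z i + e ((\<rho>0 z + 1 + count_before (exit_at d e \<rho>0 z) t) mod (2 * d)) i)"
proof -
  have "(rr_rotor (rr_run d e \<rho>0 t) z + 1) mod (2 * d)
      = (rr_rotor (rr_run d e \<rho>0 t) z mod (2 * d) + 1) mod (2 * d)"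
    by (simp add: mod_Suc_eq)
  also have "\<dots> = ((\<rho>0 z + count_before (exit_at d e \<rho>0 z) t) mod (2 * d) + 1) mod (2 * d)"
    by (simp only: rotor_invariant)
  also have "\<dots> = (\<rho>0 z + 1 + count_before (exit_at d e \<rho>0 z) t) mod (2 * d)"
    by (simp add: mod_Suc_eq)
  finally have next_dir: "(rr_rotor (rr_run d e \<rho>0 t) z + 1) mod (2 * d)
      = (\<rho>0 z + 1 + count_before (exit_at d e \<rho>0 z) t) mod (2 * d)" .
  show ?thesis unfolding pos_Suc[OF assms] next_dir ..
qed

lemma active_interval:
  assumes "\<exists>t. rr_settled (rr_run d e \<rho>0 t) = n"
  obtains L where "\<And>t. rr_settled (rr_run d e \<rho>0 t) < n \<longleftrightarrow> t < L"
proof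
  define P where "P t \<longleftrightarrow> n \<le> rr_settled (rr_run d e \<rho>0 t)" for t
  obtain T where "rr_settled (rr_run d e \<rho>0 T) = n" using assms by blast
  then have "P T" by (simp add: P_def)
  then have first: "P (LEAST t. P t)" by (rule LeastI)
  show "rr_settled (rr_run d e \<rho>0 t) < n \<longleftrightarrow> t < (LEAST t. P t)" for t
  proof
    assume "rr_settled (rr_run d e \<rho>0 t) < n"
    then have "\<not> (LEAST t. P t) \<le> t"
      using first settled_mono[of "LEAST t. P t" t d e \<rho>0] by (auto simp: P_def)
    then show "t < (LEAST t. P t)" by simp
  next
    assume "t < (LEAST t. P t)"
    then have "\<not> P t" by (rule not_less_Least)
    then show "rr_settled (rr_run d e \<rho>0 t) < n" by (simp add: P_def)
  qed
qed

lemma exits_eq_count: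
  assumes "\<And>t. rr_settled (rr_run d e \<rho>0 t) < n \<longleftrightarrow> t < L"
  shows "exit_times d e \<rho>0 n z = {t. t < L \<and> exit_at d e \<rho>0 z t}"
    and "exits d e \<rho>0 n z = count_before (exit_at d e \<rho>0 z) L"
  using assms by (auto simp: exit_times_def exits_def count_before_def exit_at_def)

lemma crossings_eq_residue_count:
  assumes L: "\<And>t. rr_settled (rr_run d e \<rho>0 t) < n \<longleftrightarrow> t < L"
    and inj: "inj_on e {..<2 * d}" and d: "0 < d"
    and j: "j < 2 * d" "e j = (\<lambda>i. w i - z i)"
  shows "crossings d e \<rho>0 n z w =
    card {k. k < exits d e \<rho>0 n z \<and> (\<rho>0 z + 1 + k) mod (2 * d) = j}"
proof -
  let ?dir = "\<lambda>t. (\<rho>0 z + 1 + count_before (exit_at d e \<rho>0 z) t) mod (2 * d)"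
  have step: "rr_pos (rr_run d e \<rho>0 (Suc t)) = w \<longleftrightarrow> ?dir t = j"
    if "exit_at d e \<rho>0 z t" for t
  proof -
    have "rr_pos (rr_run d e \<rho>0 (Suc t)) = w \<longleftrightarrow> e (?dir t) = e j"
      unfolding pos_after_exit[OF that] j(2) by (auto simp: fun_eq_iff algebra_simps)
    also have "\<dots> \<longleftrightarrow> ?dir t = j"
      using inj j(1) d by (auto dest: inj_onD)
    finally show ?thesis .
  qed
  have "{t \<in> exit_times d e \<rho>0 n z. rr_pos (rr_run d e \<rho>0 (Suc t)) = w}
      = {t. t < L \<and> exit_at d e \<rho>0 z t \<and> ?dir t = j}"
    unfolding exits_eq_count(1)[OF L] using step by auto
  then show ?thesis
    unfolding crossings_def exits_eq_count(2)[OF L]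
    using card_occurrences_by_count[of L "exit_at d e \<rho>0 z" "\<lambda>k. (\<rho>0 z + 1 + k) mod (2 * d) = j"]
    by simp
qed

lemma neighbour_direction_index:
  assumes "bij_betw e {..<2 * d} (unit_dirs d)" and "lattice_nbrs d x y"
  obtains j where "j < 2 * d" and "e j = (\<lambda>i. y i - x i)"
proof -
  have "(\<lambda>i. y i - x i) \<in> unit_dirs d"
    using assms(2) unfolding lattice_nbrs_def by (elim conjE)
  also have "unit_dirs d = e ` {..<2 * d}"
    using assms(1) by (rule bij_betw_imp_surj_on[symmetric])
  finally obtain j where "j \<in> {..<2 * d}" and "(\<lambda>i. y i - x i) = e j"
    by (rule imageE)
  then show ?thesis
    by (intro that) auto
qed

lemma lattice_nbrs_sym:
  assumes "lattice_nbrs d x y"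
  shows "lattice_nbrs d y x"
proof -
  obtain i s where i: "i < d" and s: "s \<in> {1, -1}" and dir: "(\<lambda>k. y k - x k) = (\<lambda>k. if k = i then s else 0)"
    using assms unfolding lattice_nbrs_def unit_dirs_def by blast
  have neg: "(\<lambda>k. x k - y k) = (\<lambda>k. if k = i then - s else 0)"
  proof
    fix k
    have "y k - x k = (if k = i then s else 0)" using fun_cong[OF dir, of k] by simp
    then show "x k - y k = (if k = i then - s else 0)" by (cases "k = i") simp_all
  qed
  have "- s \<in> {1, -1}" using s by auto
  with i neg assms show ?thesis
    unfolding lattice_nbrs_def unit_dirs_def by blast
qed

lemma exits_crossings_bound:
  assumes d: "0 < d"
    and e: "bij_betw e {..<2 * d} (unit_dirs d)"
    and settle: "\<exists>t. rr_settled (rr_run d e \<rho>0 t) = n"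
    and nbrs: "lattice_nbrs d x y"
  shows "\<bar>int (exits d e \<rho>0 n x) - 2 * int d * int (crossings d e \<rho>0 n x y)\<bar> \<le> 2 * int d - 1"
proof -
  obtain L where L: "\<And>t. rr_settled (rr_run d e \<rho>0 t) < n \<longleftrightarrow> t < L"
    using active_interval[OF settle] by blast
  obtain j where j: "j < 2 * d" "e j = (\<lambda>i. y i - x i)"
    using neighbour_direction_index[OF e nbrs] by blast
  have inj: "inj_on e {..<2 * d}"
    using e by (simp add: bij_betw_def)
  show ?thesis
    using residue_window_bounds[of "2 * d" j "exits d e \<rho>0 n x" "\<rho>0 x + 1"] d j(1)
    unfolding crossings_eq_residue_count[OF L inj d j] by simp
qed

theorem lemma5p1:
  fixes d n :: nat and e :: "nat \<Rightarrow> pt" and \<rho>0 :: "pt \<Rightarrow> nat" and x y :: pt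
  assumes "d \<ge> 2" and "n \<ge> 1"
    and "bij_betw e {..<2 * d} (unit_dirs d)"
    and "\<forall>z\<in>zd d. \<rho>0 z < 2 * d"
    and "\<exists>t. rr_settled (rr_run d e \<rho>0 t) = n"
    and "lattice_nbrs d x y"
  shows "\<bar>int (exits d e \<rho>0 n y) - int (exits d e \<rho>0 n x) + 2 * int d * kappa d e \<rho>0 n x y\<bar>
           \<le> 4 * int d - 2"
proof -
  have d: "0 < d" using assms(1) by simp
  have "\<bar>int (exits d e \<rho>0 n x) - 2 * int d * int (crossings d e \<rho>0 n x y)\<bar> \<le> 2 * int d - 1"
    using exits_crossings_bound[OF d assms(3,5,6)] .
  moreover have "\<bar>int (exits d e \<rho>0 n y) - 2 * int d * int (crossings d e \<rho>0 n y x)\<bar> \<le> 2 * int d - 1"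
    using exits_crossings_bound[OF d assms(3,5) lattice_nbrs_sym[OF assms(6)]] .
  ultimately show ?thesis
    unfolding kappa_def abs_le_iff right_diff_distrib by linarith
qed

end
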